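(* Let $E$, $s$ and $\mathrm{Rel}(s,\cdot)$ be as follows, and let $\mathcal{I}$ be the layout-constraint family below. Let $T^*\in\arg\max_{T\in\mathcal{I}}\mathrm{Rel}(s,T)$ and let $\hat T$ be the output of the algorithm GreedyTimeline: start with $\hat T=\emptyset$; repeatedly let $C=\{e\in E\setminus\hat T:\hat T\cup\{e\}\in\mathcal{I}\}$ and, if $C\neq\emptyset$, add to $\hat T$ an element $e\in C$ maximizing the marginal gain $\mathrm{Rel}(s,\hat T\cup\{e\})-\mathrm{Rel}(s,\hat T)$; stop when $C=\emptyset$ and return $\hat T$. Then $\mathrm{Rel}(s,\hat T)\ge \tfrac13\,\mathrm{Rel}(s,T^* )$, for any subject $s$.
   Context: Events: $\mathcal{E}$ is a finite set of events over all subjects; $E\subseteq\mathcal{E}$ is the finite set of candidate events of subject $s$. Each event $e$ has a subject $\mathrm{Sub}(e)$, a related entity $\mathrm{RE}(e)$, a timestamp $\tau(e)\in\mathbb{R}$, an entity path $\pi_{RE}(e)$ and a time path $\pi_\tau(e)$. Nonnegative scores $\mathrm{E2ECooc}(x,y)\ge0$ (entity–entity), $\mathrm{E2DCooc}(x,t)\ge0$ (entity–date) and $\mathrm{GlobalImportance}(re)\ge0$ are given. With $0\le\lambda\le1$ and $w^e_1,w^e_2,w^e_3,w^d_1,w^d_2\ge0$, $\mathrm{Rel}(s,T)=\lambda(w^e_1\mathrm{E2E}(s,T)+w^e_2\mathrm{E2EPath}(T)+w^e_3\mathrm{G2E}(T))+(1-\lambda)(w^d_1\mathrm{E2D}(s,T)+w^d_2\mathrm{E2DPath}(T))$,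 where $\mathrm{E2E}(s,T)=\sum_{re\in\{\mathrm{RE}(e):e\in T\}}\mathrm{E2ECooc}(s,re)$, $\mathrm{G2E}(T)=\sum_{re\in\{\mathrm{RE}(e):e\in T\}}\mathrm{GlobalImportance}(re)$, $\mathrm{E2EPath}(T)=\sum_{p\in\{\pi_{RE}(e):e\in T\}}\operatorname{average}_{e\in\mathcal{E},\pi_{RE}(e)=p}\mathrm{E2ECooc}(\mathrm{Sub}(e),\mathrm{RE}(e))$, $\mathrm{E2D}(s,T)=\sum_{t\in\{\tau(e):e\in T\}}\mathrm{E2DCooc}(s,t)$, $\mathrm{E2DPath}(T)=\sum_{p\in\{\pi_\tau(e):e\in T\}}\operatorname{average}_{e\in\mathcal{E},\pi_\tau(e)=p}\mathrm{E2DCooc}(\mathrm{Sub}(e),\tau(e))$; all sums are over sets (each distinct value counted once). Layout constraint: fix a real $t_w>0$ and an integer $n\ge1$; $\mathcal{I}$ is the family of all $T\subseteq E$ with $|\{e\in T:\tau(e)\in[t,t+t_w)\}|\le n$ for every $t\in\mathbb{R}$. *)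

theory Defs
  imports Complex_Main
begin

definition average :: "'a set \<Rightarrow> ('a \<Rightarrow> real) \<Rightarrow> real" where
  "average A f = (\<Sum>x\<in>A. f x) / real (card A)"

definition E2E :: "('r \<Rightarrow> 'r \<Rightarrow> real) \<Rightarrow> ('e \<Rightarrow> 'r) \<Rightarrow> 'r \<Rightarrow> 'e set \<Rightarrow> real" where
  "E2E E2ECooc RE s T = (\<Sum>re\<in>RE ` T. E2ECooc s re)"

definition G2E :: "('r \<Rightarrow> real) \<Rightarrow> ('e \<Rightarrow> 'r) \<Rightarrow> 'e set \<Rightarrow> real" where
  "G2E GI RE T = (\<Sum>re\<in>RE ` T. GI re)"

definition E2EPath :: "'e set \<Rightarrow> ('e \<Rightarrow> 'r) \<Rightarrow> ('e \<Rightarrow> 'r) \<Rightarrow> ('e \<Rightarrow> 'p)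
    \<Rightarrow> ('r \<Rightarrow> 'r \<Rightarrow> real) \<Rightarrow> 'e set \<Rightarrow> real" where
  "E2EPath Ev Sub RE piRE E2ECooc T =
     (\<Sum>p\<in>piRE ` T. average {e\<in>Ev. piRE e = p} (\<lambda>e. E2ECooc (Sub e) (RE e)))"

definition E2D :: "('r \<Rightarrow> real \<Rightarrow> real) \<Rightarrow> ('e \<Rightarrow> real) \<Rightarrow> 'r \<Rightarrow> 'e set \<Rightarrow> real" where
  "E2D E2DCooc tau s T = (\<Sum>t\<in>tau ` T. E2DCooc s t)"

definition E2DPath :: "'e set \<Rightarrow> ('e \<Rightarrow> 'r) \<Rightarrow> ('e \<Rightarrow> real) \<Rightarrow> ('e \<Rightarrow> 'q)
    \<Rightarrow> ('r \<Rightarrow> real \<Rightarrow> real) \<Rightarrow> 'e set \<Rightarrow> real" where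
  "E2DPath Ev Sub tau pitau E2DCooc T =
     (\<Sum>p\<in>pitau ` T. average {e\<in>Ev. pitau e = p} (\<lambda>e. E2DCooc (Sub e) (tau e)))"

definition Rel ::
  "'e set \<Rightarrow> ('e \<Rightarrow> 'r) \<Rightarrow> ('e \<Rightarrow> 'r) \<Rightarrow> ('e \<Rightarrow> real) \<Rightarrow> ('e \<Rightarrow> 'p) \<Rightarrow> ('e \<Rightarrow> 'q)
   \<Rightarrow> ('r \<Rightarrow> 'r \<Rightarrow> real) \<Rightarrow> ('r \<Rightarrow> real \<Rightarrow> real) \<Rightarrow> ('r \<Rightarrow> real)
   \<Rightarrow> real \<Rightarrow> real \<Rightarrow> real \<Rightarrow> real \<Rightarrow> real \<Rightarrow> real
   \<Rightarrow> 'r \<Rightarrow> 'e set \<Rightarrow> real" where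
  "Rel Ev Sub RE tau piRE pitau E2ECooc E2DCooc GI lam we1 we2 we3 wd1 wd2 s T =
     lam * (we1 * E2E E2ECooc RE s T + we2 * E2EPath Ev Sub RE piRE E2ECooc T
            + we3 * G2E GI RE T)
     + (1 - lam) * (wd1 * E2D E2DCooc tau s T + wd2 * E2DPath Ev Sub tau pitau E2DCooc T)"

definition layout_family :: "'e set \<Rightarrow> ('e \<Rightarrow> real) \<Rightarrow> real \<Rightarrow> nat \<Rightarrow> 'e set set" where
  "layout_family E tau tw n =
     {T. T \<subseteq> E \<and> (\<forall>t::real. card {e\<in>T. tau e \<in> {t..<t + tw}} \<le> n)}"

definition greedy_cands :: "'e set \<Rightarrow> 'e set set \<Rightarrow> 'e set \<Rightarrow> 'e set" where
  "greedy_cands E I T = {e \<in> E - T. insert e T \<in> I}"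

text \<open>States reachable by GreedyTimeline (ties broken arbitrarily): each step adds a
  candidate of maximal marginal gain f(T+e) - f(T).\<close>
inductive greedy_reach :: "'e set \<Rightarrow> 'e set set \<Rightarrow> ('e set \<Rightarrow> real) \<Rightarrow> 'e set \<Rightarrow> bool"
  for E I f where
  empty: "greedy_reach E I f {}"
| step: "greedy_reach E I f T \<Longrightarrow> e \<in> greedy_cands E I T \<Longrightarrow>
         (\<forall>e'\<in>greedy_cands E I T. f (insert e' T) - f T \<le> f (insert e T) - f T) \<Longrightarrow>
         greedy_reach E I f (insert e T)"

definition greedy_output :: "'e set \<Rightarrow> 'e set set \<Rightarrow> ('e set \<Rightarrow> real) \<Rightarrow> 'e set \<Rightarrow> bool" where
  "greedy_output E I f T \<longleftrightarrow> greedy_reach E I f T \<and> greedy_cands E I T = {}"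

end

theory Submission
  imports Defs
begin

text \<open>Rel is a nonnegative combination of coverage functions, hence monotone and
  submodular. The layout family is downward closed, and for feasible T and T* at most
  2|T| elements of T* cannot be added to T: each such element has n elements of T
  within time distance tw, while an open interval of length 2 tw contains at most 2n
  elements of T*. For such "2-extendible" families the classical charging argument for
  greedy maximisation applies: the elements of T* left out by greedy are charged to the
  greedy steps that blocked them, at most two per step, each at most the gain of that
  step; hence Rel(T*) <= Rel(T) + 2 Rel(T) for the greedy output T.\<close>

definition marginal_gain :: "('a set \<Rightarrow> real) \<Rightarrow> 'a set \<Rightarrow> 'a \<Rightarrow> real" where
  "marginal_gain f T x = f (insert x T) - f T"

text \<open>Only finite sets are constrained: on infinite sets the sums defining
  coverage functions degenerate to 0.\<close>
definition monotone_submodular :: "('a set \<Rightarrow> real) \<Rightarrow> bool" where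
  "monotone_submodular f \<longleftrightarrow>
     (\<forall>A B. finite B \<longrightarrow> A \<subseteq> B \<longrightarrow>
        f A \<le> f B \<and> (\<forall>x. marginal_gain f B x \<le> marginal_gain f A x))"

lemma monotone_submodularD:
  assumes "monotone_submodular f" "finite B" "A \<subseteq> B"
  shows monotone_submodular_mono: "f A \<le> f B"
    and monotone_submodular_gain_antimono: "marginal_gain f B x \<le> marginal_gain f A x"
  using assms unfolding monotone_submodular_def by blast+

lemma monotone_submodular_add:
  assumes "monotone_submodular f" "monotone_submodular g"
  shows "monotone_submodular (\<lambda>T. f T + g T)"
  using assms unfolding monotone_submodular_def marginal_gain_def
  by (smt (verit, best))

lemma monotone_submodular_scale:
  assumes "0 \<le> c" "monotone_submodular f"
  shows "monotone_submodular (\<lambda>T. c * f T)"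
  using assms unfolding monotone_submodular_def marginal_gain_def
  by (metis mult_left_mono right_diff_distrib)

definition coverage :: "('a \<Rightarrow> 'v) \<Rightarrow> ('v \<Rightarrow> real) \<Rightarrow> 'a set \<Rightarrow> real" where
  "coverage \<phi> w T = (\<Sum>v\<in>\<phi> ` T. w v)"

lemma marginal_gain_coverage:
  assumes "finite T"
  shows "marginal_gain (coverage \<phi> w) T x = (if \<phi> x \<in> \<phi> ` T then 0 else w (\<phi> x))"
  using assms by (simp add: marginal_gain_def coverage_def insert_absorb)

lemma monotone_submodular_coverage:
  fixes \<phi> :: "'a \<Rightarrow> 'v"
  assumes "\<And>v. 0 \<le> w v"
  shows "monotone_submodular (coverage \<phi> w)"
  unfolding monotone_submodular_def
proof (intro allI impI conjI)
  fix A B :: "'a set" and x assume "finite B" "A \<subseteq> B"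
  then show "coverage \<phi> w A \<le> coverage \<phi> w B"
    unfolding coverage_def using assms by (intro sum_mono2) auto
  have "finite A" using \<open>finite B\<close> \<open>A \<subseteq> B\<close> by (rule finite_subset[rotated])
  then show "marginal_gain (coverage \<phi> w) B x \<le> marginal_gain (coverage \<phi> w) A x"
    using \<open>finite B\<close> \<open>A \<subseteq> B\<close> assms by (auto simp: marginal_gain_coverage)
qed

lemma average_nonneg: "(\<And>x. 0 \<le> f x) \<Longrightarrow> 0 \<le> average A f"
  unfolding average_def by (intro divide_nonneg_nonneg sum_nonneg) auto

lemma monotone_submodular_Rel:
  assumes "\<And>x y. E2ECooc x y \<ge> 0" "\<And>x t. E2DCooc x t \<ge> 0" "\<And>x. GI x \<ge> 0"
    and "0 \<le> lam" "lam \<le> 1"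
    and "we1 \<ge> 0" "we2 \<ge> 0" "we3 \<ge> 0" "wd1 \<ge> 0" "wd2 \<ge> 0"
  shows "monotone_submodular (Rel Ev Sub RE tau piRE pitau E2ECooc E2DCooc GI lam we1 we2 we3 wd1 wd2 s)"
proof -
  define wRE where "wRE p = average {e\<in>Ev. piRE e = p} (\<lambda>e. E2ECooc (Sub e) (RE e))" for p
  define w\<tau> where "w\<tau> q = average {e\<in>Ev. pitau e = q} (\<lambda>e. E2DCooc (Sub e) (tau e))" for q
  have "Rel Ev Sub RE tau piRE pitau E2ECooc E2DCooc GI lam we1 we2 we3 wd1 wd2 s =
    (\<lambda>T. lam * (we1 * coverage RE (E2ECooc s) T + we2 * coverage piRE wRE T
                 + we3 * coverage RE GI T)
         + (1 - lam) * (wd1 * coverage tau (E2DCooc s) T + wd2 * coverage pitau w\<tau> T))"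
    by (simp add: fun_eq_iff Rel_def E2E_def E2EPath_def G2E_def E2D_def E2DPath_def
        coverage_def wRE_def w\<tau>_def)
  moreover have "0 \<le> wRE p" "0 \<le> w\<tau> q" for p q
    unfolding wRE_def w\<tau>_def using assms(1,2) by (auto intro: average_nonneg)
  ultimately show ?thesis
    using assms by (simp add: monotone_submodular_add monotone_submodular_scale
        monotone_submodular_coverage)
qed

lemma submodular_union_le_sum_gains:
  assumes "monotone_submodular f" "finite T" "finite S"
  shows "f (T \<union> S) \<le> f T + (\<Sum>y\<in>S. marginal_gain f T y)"
  using assms(3)
proof (induction S rule: finite_induct)
  case empty
  then show ?case by simp
next
  case (insert x S)
  have "f (T \<union> insert x S) - f (T \<union> S) = marginal_gain f (T \<union> S) x"
    by (simp add: marginal_gain_def)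
  also have "\<dots> \<le> marginal_gain f T x"
    using assms(1,2) insert.hyps(1) by (intro monotone_submodular_gain_antimono) auto
  finally show ?case using insert by simp
qed

definition blocked :: "'a set set \<Rightarrow> 'a set \<Rightarrow> 'a set \<Rightarrow> 'a set" where
  "blocked I Opt T = {y \<in> Opt - T. insert y T \<notin> I}"

locale greedy_blocking_system =
  fixes E :: "'a set" and I :: "'a set set" and f :: "'a set \<Rightarrow> real"
    and Opt :: "'a set" and p :: nat
  assumes finite_ground: "finite E"
    and family_subset: "T \<in> I \<Longrightarrow> T \<subseteq> E"
    and down_closed: "B \<in> I \<Longrightarrow> A \<subseteq> B \<Longrightarrow> A \<in> I"
    and Opt_in: "Opt \<in> I"
    and card_blocked_le: "T \<in> I \<Longrightarrow> card (blocked I Opt T) \<le> p * card T"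
    and f_monotone_submodular: "monotone_submodular f"
    and f_empty_nonneg: "0 \<le> f {}"
begin

lemma finite_family_member: "T \<in> I \<Longrightarrow> finite T"
  using family_subset finite_ground finite_subset by blast

lemma greedy_reach_in_family: "greedy_reach E I f T \<Longrightarrow> T \<in> I"
  by (induction rule: greedy_reach.induct)
    (use Opt_in down_closed in \<open>auto simp: greedy_cands_def\<close>)

lemma greedy_cands_insert_subset:
  "greedy_cands E I (insert e T) \<subseteq> greedy_cands E I T"
  using down_closed[of "insert _ (insert e T)" "insert _ T"] by (auto simp: greedy_cands_def)

lemma blocked_insert_mono:
  "insert e T \<in> I \<Longrightarrow> blocked I Opt T \<subseteq> blocked I Opt (insert e T)"
  using down_closed[of "insert _ (insert e T)" "insert _ T"] by (auto simp: blocked_def)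

lemma blocked_insert_diff_subset_cands:
  "blocked I Opt (insert e T) - blocked I Opt T \<subseteq> greedy_cands E I T"
  using family_subset[OF Opt_in] by (auto simp: blocked_def greedy_cands_def)

text \<open>Abel summation of the greedy gains, done along the run: every element of
  Opt blocked at T is charged its gain over T, and each of the remaining
  p |T| - |blocked| slots is charged the bound d on the gains still available.\<close>
definition charged :: "'a set \<Rightarrow> real \<Rightarrow> bool" where
  "charged T d \<longleftrightarrow> 0 \<le> d
     \<and> (\<forall>e\<in>greedy_cands E I T. marginal_gain f T e \<le> d)
     \<and> (\<Sum>y\<in>blocked I Opt T. marginal_gain f T y)
         + (real (p * card T) - real (card (blocked I Opt T))) * d \<le> p * f T"

lemma charged_empty: "\<exists>d. charged {} d"
proof
  have "blocked I Opt {} = {}"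
    using Opt_in down_closed by (auto simp: blocked_def)
  moreover have "finite (greedy_cands E I {})"
    using finite_ground by (simp add: greedy_cands_def)
  ultimately show "charged {} (Max (insert 0 (marginal_gain f {} ` greedy_cands E I {})))"
    using f_empty_nonneg by (simp add: charged_def)
qed

lemma charged_step:
  assumes "charged T d" "T \<in> I" and e: "e \<in> greedy_cands E I T"
    and greedy: "\<forall>e'\<in>greedy_cands E I T. marginal_gain f T e' \<le> marginal_gain f T e"
  shows "charged (insert e T) (marginal_gain f T e)"
proof -
  let ?T' = "insert e T" and ?X = "blocked I Opt T" and ?X' = "blocked I Opt (insert e T)"
  define \<delta> where "\<delta> = marginal_gain f T e"
  have T'_in: "?T' \<in> I" and "e \<notin> T" using e by (auto simp: greedy_cands_def)
  have fin_T: "finite T" and fin_T': "finite ?T'" and fin_X': "finite ?X'"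
    using finite_family_member[OF \<open>T \<in> I\<close>] finite_family_member[OF Opt_in]
    by (auto simp: blocked_def)
  have \<delta>_nonneg: "0 \<le> \<delta>"
    using monotone_submodular_mono[OF f_monotone_submodular fin_T', of T]
    by (auto simp: \<delta>_def marginal_gain_def)
  have gain_T'_le: "marginal_gain f ?T' y \<le> marginal_gain f T y" for y
    using f_monotone_submodular fin_T' by (rule monotone_submodular_gain_antimono) auto
  have X_sub: "?X \<subseteq> ?X'" using T'_in by (rule blocked_insert_mono)
  have "(\<Sum>y\<in>?X'. marginal_gain f ?T' y)
      = (\<Sum>y\<in>?X. marginal_gain f ?T' y) + (\<Sum>y\<in>?X' - ?X. marginal_gain f ?T' y)"
    using sum.subset_diff[OF X_sub fin_X'] by (simp add: add.commute)
  also have "\<dots> \<le> (\<Sum>y\<in>?X. marginal_gain f T y) + (\<Sum>y\<in>?X' - ?X. \<delta>)"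
    using gain_T'_le blocked_insert_diff_subset_cands[of e T] greedy unfolding \<delta>_def
    by (intro add_mono sum_mono) (auto intro: order_trans)
  finally have sum_X': "(\<Sum>y\<in>?X'. marginal_gain f ?T' y)
      \<le> (\<Sum>y\<in>?X. marginal_gain f T y) + real (card (?X' - ?X)) * \<delta>"
    by simp
  have card_X': "card ?X' = card ?X + card (?X' - ?X)"
    using card_Diff_subset[OF finite_subset[OF X_sub fin_X'] X_sub] card_mono[OF fin_X' X_sub]
    by simp
  have "real (card ?X) \<le> real (p * card T)"
    unfolding of_nat_le_iff by (rule card_blocked_le[OF \<open>T \<in> I\<close>])
  then have "(real (p * card T) - real (card ?X)) * \<delta> \<le> (real (p * card T) - real (card ?X)) * d"
    using assms(1) e by (intro mult_left_mono) (auto simp: charged_def \<delta>_def)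
  with assms(1) sum_X' card_X' have
    "(\<Sum>y\<in>?X'. marginal_gain f ?T' y) + (real (p * card ?T') - real (card ?X')) * \<delta>
      \<le> p * (f T + \<delta>)"
    using fin_T \<open>e \<notin> T\<close> by (simp add: charged_def algebra_simps)
  moreover have "\<forall>e'\<in>greedy_cands E I ?T'. marginal_gain f ?T' e' \<le> \<delta>"
    using greedy_cands_insert_subset[of e T] gain_T'_le greedy unfolding \<delta>_def
    by (blast intro: order_trans)
  ultimately show ?thesis
    using \<delta>_nonneg by (simp add: charged_def \<delta>_def marginal_gain_def)
qed

lemma greedy_reach_charged: "greedy_reach E I f T \<Longrightarrow> \<exists>d. charged T d"
proof (induction rule: greedy_reach.induct)
  case empty
  then show ?case by (rule charged_empty)
next
  case (step T e)
  then show ?case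
    using charged_step greedy_reach_in_family unfolding marginal_gain_def by blast
qed

theorem greedy_output_approximation:
  assumes "greedy_output E I f T"
  shows "f Opt \<le> (p + 1) * f T"
proof -
  have reach: "greedy_reach E I f T" and no_cands: "greedy_cands E I T = {}"
    using assms by (auto simp: greedy_output_def)
  have "T \<in> I" by (rule greedy_reach_in_family[OF reach])
  obtain d where d: "charged T d" using greedy_reach_charged[OF reach] ..
  have all_blocked: "blocked I Opt T = Opt - T"
    using no_cands family_subset[OF Opt_in] by (auto simp: blocked_def greedy_cands_def)
  have fin: "finite T" "finite (Opt - T)"
    using finite_family_member[OF \<open>T \<in> I\<close>] finite_family_member[OF Opt_in] by auto
  have "real (card (Opt - T)) \<le> real (p * card T)"
    unfolding of_nat_le_iff using card_blocked_le[OF \<open>T \<in> I\<close>] all_blocked by simp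
  then have "0 \<le> (real (p * card T) - real (card (Opt - T))) * d"
    using d by (simp add: charged_def)
  then have gains: "(\<Sum>y\<in>Opt - T. marginal_gain f T y) \<le> p * f T"
    using d all_blocked by (simp add: charged_def)
  have "f Opt \<le> f (T \<union> (Opt - T))"
    using f_monotone_submodular fin by (intro monotone_submodular_mono) auto
  also have "\<dots> \<le> f T + (\<Sum>y\<in>Opt - T. marginal_gain f T y)"
    using f_monotone_submodular fin by (rule submodular_union_le_sum_gains)
  finally show ?thesis using gains by (simp add: algebra_simps)
qed

end

lemma sum_card_filter_swap:
  assumes "finite A" "finite B"
  shows "(\<Sum>a\<in>A. card {b\<in>B. P a b}) = (\<Sum>b\<in>B. card {a\<in>A. P a b})"
proof -
  have card_as_sum: "card {x\<in>X. Q x} = (\<Sum>x\<in>X. if Q x then 1 else 0 :: nat)"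
    if "finite X" for X and Q :: "'c \<Rightarrow> bool"
    using that by (simp add: sum.inter_filter[symmetric])
  show ?thesis
    using assms by (simp add: card_as_sum sum.swap[of _ B A])
qed

lemma layout_family_subset: "T \<in> layout_family E tau tw n \<Longrightarrow> T \<subseteq> E"
  by (simp add: layout_family_def)

lemma layout_family_down_closed:
  assumes "finite E" "B \<in> layout_family E tau tw n" "A \<subseteq> B"
  shows "A \<in> layout_family E tau tw n"
  unfolding layout_family_def
proof (intro CollectI conjI allI)
  have "B \<subseteq> E" using assms(2) by (rule layout_family_subset)
  then show "A \<subseteq> E" using assms(3) by blast
  fix t
  have "finite B" using \<open>B \<subseteq> E\<close> assms(1) by (rule finite_subset)
  then have "card {e\<in>A. tau e \<in> {t..<t + tw}} \<le> card {e\<in>B. tau e \<in> {t..<t + tw}}"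
    using assms(3) by (intro card_mono) auto
  also have "\<dots> \<le> n" using assms(2) by (simp add: layout_family_def)
  finally show "card {e\<in>A. tau e \<in> {t..<t + tw}} \<le> n" .
qed

lemma layout_family_card_le_if_spread_less:
  assumes "finite E" "T \<in> layout_family E tau tw n" "S \<subseteq> T"
    and spread: "\<And>x y. x \<in> S \<Longrightarrow> y \<in> S \<Longrightarrow> tau y - tau x < tw"
  shows "card S \<le> n"
proof (cases "S = {}")
  case False
  have fin_T: "finite T"
    using layout_family_subset[OF assms(2)] assms(1) by (rule finite_subset)
  then have fin_S: "finite S" using assms(3) by (rule finite_subset[rotated])
  define t where "t = Min (tau ` S)"
  have "t \<in> tau ` S" unfolding t_def using fin_S False by (intro Min_in) auto
  then obtain x where "x \<in> S" "tau x = t" by auto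
  have "S \<subseteq> {e\<in>T. tau e \<in> {t..<t + tw}}"
  proof
    fix y assume "y \<in> S"
    have "t \<le> tau y" unfolding t_def using fin_S \<open>y \<in> S\<close> by (intro Min_le) auto
    moreover have "tau y < t + tw" using spread[OF \<open>x \<in> S\<close> \<open>y \<in> S\<close>] \<open>tau x = t\<close> by simp
    ultimately show "y \<in> {e\<in>T. tau e \<in> {t..<t + tw}}" using assms(3) \<open>y \<in> S\<close> by auto
  qed
  then have "card S \<le> card {e\<in>T. tau e \<in> {t..<t + tw}}"
    using fin_T by (intro card_mono) auto
  also have "\<dots> \<le> n" using assms(2) by (simp add: layout_family_def)
  finally show ?thesis .
qed simp

lemma layout_family_card_near:
  assumes "finite E" "T \<in> layout_family E tau tw n"
  shows "card {y\<in>T. \<bar>tau y - c\<bar> < tw} \<le> 2 * n"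
proof -
  let ?L = "{y\<in>T. c - tw < tau y \<and> tau y < c}" and ?R = "{y\<in>T. c \<le> tau y \<and> tau y < c + tw}"
  have "finite T" using layout_family_subset[OF assms(2)] assms(1) by (rule finite_subset)
  then have "card {y\<in>T. \<bar>tau y - c\<bar> < tw} \<le> card (?L \<union> ?R)"
    by (intro card_mono) (auto simp: abs_less_iff)
  also have "\<dots> \<le> card ?L + card ?R" by (rule card_Un_le)
  also have "\<dots> \<le> n + n"
    using assms by (intro add_mono layout_family_card_le_if_spread_less) auto
  finally show ?thesis by simp
qed

lemma layout_family_blocked_near:
  assumes "T \<in> layout_family E tau tw n" "y \<in> E" "y \<notin> T"
    and "insert y T \<notin> layout_family E tau tw n" "finite T"
  shows "n \<le> card {e\<in>T. \<bar>tau e - tau y\<bar> < tw}"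
proof -
  have "insert y T \<subseteq> E" using assms(1,2) layout_family_subset by blast
  with assms(4) obtain t where overfull: "n < card {e\<in>insert y T. tau e \<in> {t..<t + tw}}"
    by (auto simp: layout_family_def not_le)
  let ?W = "{e\<in>T. tau e \<in> {t..<t + tw}}"
  have "card ?W \<le> n" using assms(1) by (simp add: layout_family_def)
  moreover have window: "{e\<in>insert y T. tau e \<in> {t..<t + tw}}
      = (if tau y \<in> {t..<t + tw} then insert y ?W else ?W)"
    by auto
  ultimately have y_in: "tau y \<in> {t..<t + tw}"
    using overfull by (auto split: if_splits)
  then have "n \<le> card ?W"
    using overfull window assms(3,5) by simp
  also have "\<dots> \<le> card {e\<in>T. \<bar>tau e - tau y\<bar> < tw}"
    using y_in assms(5) by (intro card_mono) auto
  finally show ?thesis .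
qed

text \<open>Double counting the pairs of a blocked element and an element of T at time
  distance below tw: each blocked element lies in at least n such pairs, each element
  of T in at most 2n.\<close>
lemma layout_family_card_blocked_le:
  assumes "finite E" "n \<ge> 1"
    and T: "T \<in> layout_family E tau tw n" and Opt: "Opt \<in> layout_family E tau tw n"
  shows "card (blocked (layout_family E tau tw n) Opt T) \<le> 2 * card T"
proof -
  let ?B = "blocked (layout_family E tau tw n) Opt T"
  have Opt_sub: "Opt \<subseteq> E" using Opt by (rule layout_family_subset)
  have fin: "finite T" "finite Opt"
    using finite_subset[OF layout_family_subset[OF T] assms(1)] finite_subset[OF Opt_sub assms(1)]
    by auto
  then have fin_B: "finite ?B" by (simp add: blocked_def)
  have "n * card ?B = (\<Sum>y\<in>?B. n)" by simp
  also have "\<dots> \<le> (\<Sum>y\<in>?B. card {e\<in>T. \<bar>tau e - tau y\<bar> < tw})"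
  proof (intro sum_mono layout_family_blocked_near[OF T _ _ _ fin(1)])
    fix y assume "y \<in> ?B"
    then show "y \<in> E" "y \<notin> T" "insert y T \<notin> layout_family E tau tw n"
      using Opt_sub by (auto simp: blocked_def)
  qed
  also have "\<dots> = (\<Sum>e\<in>T. card {y\<in>?B. \<bar>tau e - tau y\<bar> < tw})"
    by (rule sum_card_filter_swap[OF fin_B fin(1), where P = "\<lambda>y e. \<bar>tau e - tau y\<bar> < tw"])
  also have "\<dots> \<le> (\<Sum>e\<in>T. 2 * n)"
  proof (intro sum_mono)
    fix e
    have "card {y\<in>?B. \<bar>tau e - tau y\<bar> < tw} \<le> card {y\<in>Opt. \<bar>tau y - tau e\<bar> < tw}"
      using fin by (intro card_mono) (auto simp: blocked_def abs_minus_commute)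
    also have "\<dots> \<le> 2 * n" using assms(1) Opt by (rule layout_family_card_near)
    finally show "card {y\<in>?B. \<bar>tau e - tau y\<bar> < tw} \<le> 2 * n" .
  qed
  finally have "n * card ?B \<le> n * (2 * card T)" by (simp add: ac_simps)
  then show ?thesis using assms(2) by simp
qed

theorem theorem3:
  fixes Ev E :: "'e set"
    and Sub RE :: "'e \<Rightarrow> 'r" and tau :: "'e \<Rightarrow> real"
    and piRE :: "'e \<Rightarrow> 'p" and pitau :: "'e \<Rightarrow> 'q"
    and E2ECooc :: "'r \<Rightarrow> 'r \<Rightarrow> real" and E2DCooc :: "'r \<Rightarrow> real \<Rightarrow> real"
    and GI :: "'r \<Rightarrow> real"
    and lam we1 we2 we3 wd1 wd2 tw :: real and n :: nat and s :: 'r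
    and Tstar That :: "'e set"
  assumes "finite Ev" and "E \<subseteq> Ev"
    and "\<And>x y. E2ECooc x y \<ge> 0" and "\<And>x t. E2DCooc x t \<ge> 0" and "\<And>x. GI x \<ge> 0"
    and "0 \<le> lam" and "lam \<le> 1"
    and "we1 \<ge> 0" and "we2 \<ge> 0" and "we3 \<ge> 0" and "wd1 \<ge> 0" and "wd2 \<ge> 0"
    and "tw > 0" and "n \<ge> 1"
    and "Tstar \<in> layout_family E tau tw n"
    and "\<forall>T\<in>layout_family E tau tw n.
           Rel Ev Sub RE tau piRE pitau E2ECooc E2DCooc GI lam we1 we2 we3 wd1 wd2 s T
           \<le> Rel Ev Sub RE tau piRE pitau E2ECooc E2DCooc GI lam we1 we2 we3 wd1 wd2 s Tstar"
    and "greedy_output E (layout_family E tau tw n)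
           (Rel Ev Sub RE tau piRE pitau E2ECooc E2DCooc GI lam we1 we2 we3 wd1 wd2 s) That"
  shows "Rel Ev Sub RE tau piRE pitau E2ECooc E2DCooc GI lam we1 we2 we3 wd1 wd2 s That
         \<ge> 1/3 * Rel Ev Sub RE tau piRE pitau E2ECooc E2DCooc GI lam we1 we2 we3 wd1 wd2 s Tstar"
proof -
  let ?f = "Rel Ev Sub RE tau piRE pitau E2ECooc E2DCooc GI lam we1 we2 we3 wd1 wd2 s"
  have "finite E" using assms(2,1) by (rule finite_subset)
  interpret greedy_blocking_system E "layout_family E tau tw n" ?f Tstar 2
  proof
    show "monotone_submodular ?f"
      using assms(3-12) by (rule monotone_submodular_Rel)
    show "0 \<le> ?f {}"
      by (simp add: Rel_def E2E_def E2EPath_def G2E_def E2D_def E2DPath_def)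
  qed (use \<open>finite E\<close> assms(14,15) in
      \<open>auto dest: layout_family_subset intro: layout_family_down_closed layout_family_card_blocked_le\<close>)
  show ?thesis
    using greedy_output_approximation[OF assms(17)] by simp
qed

end
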